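(* Let $X\in\mathbb{R}^{n\times d}$, $y\in\mathbb{R}^n$, and let $g:\mathbb{R}^d\to(-\infty,\infty]$ be a proper lower semicontinuous convex function with $g(k\beta)=kg(\beta)$ for all $k\ge0$, $\beta\in\mathbb{R}^d$, such that there exists $\beta\in\mathrm{relint}(\mathrm{dom}(g))$ and $P(\beta):=\frac12\|y-X\beta\|_2^2+g(\beta)$ attains its infimum. Let $-f^\star(-\theta)=-\frac12\|\theta\|_2^2+y^\top\theta$ and define \[ u^{\mathrm{DS}}(\theta;\tilde\beta)=\begin{cases}-f^\star(-\theta) & \text{if } g(\tilde\beta)-\theta^\top X\tilde\beta\ge0,\\ -\infty & \text{otherwise},\end{cases}\qquad u^{\mathrm{GM}}(\theta;\tilde\beta)=\begin{cases}-f^\star(-\theta) & \text{if } -f^\star(-\theta)\le P(\tilde\beta),\\ -\infty & \text{otherwise}.\end{cases} \] Then $u^{\mathrm{DS}}(\theta;\tilde\beta)\le u^{\mathrm{GM}}(\theta;\tilde\beta)$ for all $\tilde\beta\in\mathbb{R}^d$ and $\theta\in\mathbb{R}^n$.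
   Context: $\mathrm{dom}(g)=\{\beta:|g(\beta)|<\infty\}$; $\mathrm{relint}$ is relative interior; $f(z)=\frac12\|y-z\|_2^2$ and $f^\star$ is its Fenchel conjugate. *)

theory Defs
  imports "HOL-Analysis.Analysis"
begin

text \<open>Extended-real-valued functions g : R^d -> (-inf, +inf] are modelled as
  functions into ereal that never take the value -inf.\<close>

definition proper_fun :: "('a \<Rightarrow> ereal) \<Rightarrow> bool" where
  "proper_fun g \<longleftrightarrow> (\<forall>x. g x \<noteq> -\<infinity>) \<and> (\<exists>x. g x \<noteq> \<infinity>)"

definition lsc_fun :: "('a::topological_space \<Rightarrow> ereal) \<Rightarrow> bool" where
  "lsc_fun g \<longleftrightarrow> (\<forall>c::ereal. closed {x. g x \<le> c})"

definition convex_efun :: "('a::real_vector \<Rightarrow> ereal) \<Rightarrow> bool" where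
  "convex_efun g \<longleftrightarrow> convex {(x, t::real). g x \<le> ereal t}"

definition edom :: "('a \<Rightarrow> ereal) \<Rightarrow> 'a set" where
  "edom g = {x. \<bar>g x\<bar> < \<infinity>}"

definition primal_obj ::
  "real^'d^'n \<Rightarrow> real^'n \<Rightarrow> (real^'d \<Rightarrow> ereal) \<Rightarrow> real^'d \<Rightarrow> ereal" where
  "primal_obj X y g b = ereal (1/2 * (norm (y - X *v b))\<^sup>2) + g b"

definition neg_fconj :: "real^'n \<Rightarrow> real^'n \<Rightarrow> real" where
  "neg_fconj y \<theta> = - 1/2 * (norm \<theta>)\<^sup>2 + y \<bullet> \<theta>"

definition u_DS ::
  "real^'d^'n \<Rightarrow> real^'n \<Rightarrow> (real^'d \<Rightarrow> ereal) \<Rightarrow> real^'n \<Rightarrow> real^'d \<Rightarrow> ereal" where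
  "u_DS X y g \<theta> bt =
     (if g bt - ereal (\<theta> \<bullet> (X *v bt)) \<ge> 0 then ereal (neg_fconj y \<theta>) else -\<infinity>)"

definition u_GM ::
  "real^'d^'n \<Rightarrow> real^'n \<Rightarrow> (real^'d \<Rightarrow> ereal) \<Rightarrow> real^'n \<Rightarrow> real^'d \<Rightarrow> ereal" where
  "u_GM X y g \<theta> bt =
     (if ereal (neg_fconj y \<theta>) \<le> primal_obj X y g bt then ereal (neg_fconj y \<theta>) else -\<infinity>)"

end

theory Submission
  imports Defs
begin

(* Fenchel-Young for f = 1/2 ||y - .||^2 gives -f*(-theta) <= f(X b) + theta . X b, and the
   Dual-Slope condition g(b) >= theta . X b turns the right-hand side into a lower bound for P(b).
   Only the inequality g(b) >= theta . *)

lemma half_norm_fenchel_young: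
  fixes y z t :: "'a::real_inner"
  shows "- 1/2 * (norm t)\<^sup>2 + y \<bullet> t \<le> 1/2 * (norm (y - z))\<^sup>2 + t \<bullet> z"
proof -
  have "0 \<le> (norm (y - z - t))\<^sup>2" by simp
  also have "\<dots> = (norm (y - z))\<^sup>2 - 2 * ((y - z) \<bullet> t) + (norm t)\<^sup>2"
    by (simp add: power2_norm_eq_inner inner_diff_left inner_diff_right inner_commute)
  finally show ?thesis
    by (simp add: inner_diff_left inner_commute algebra_simps)
qed

lemma neg_fconj_le_primal_obj:
  assumes "ereal (\<theta> \<bullet> (X *v b)) \<le> g b"
  shows "ereal (neg_fconj y \<theta>) \<le> primal_obj X y g b"
proof -
  have "ereal (neg_fconj y \<theta>) \<le> ereal (1/2 * (norm (y - X *v b))\<^sup>2) + ereal (\<theta> \<bullet> (X *v b))"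
    using half_norm_fenchel_young[of \<theta> y "X *v b"] by (simp add: neg_fconj_def)
  also have "\<dots> \<le> primal_obj X y g b"
    unfolding primal_obj_def using assms by (rule add_left_mono)
  finally show ?thesis .
qed

theorem theorem10:
  fixes X :: "real^'d^'n" and y :: "real^'n" and g :: "real^'d \<Rightarrow> ereal"
  assumes "proper_fun g" and "lsc_fun g" and "convex_efun g"
    and "\<And>k \<beta>. k \<ge> 0 \<Longrightarrow> g (k *\<^sub>R \<beta>) = ereal k * g \<beta>"
    and "rel_interior (edom g) \<noteq> {}"
    and "\<exists>\<beta>0. \<forall>\<beta>. primal_obj X y g \<beta>0 \<le> primal_obj X y g \<beta>"
  shows "\<forall>bt \<theta>. u_DS X y g \<theta> bt \<le> u_GM X y g \<theta> bt"
proof (intro allI)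
  fix bt \<theta>
  show "u_DS X y g \<theta> bt \<le> u_GM X y g \<theta> bt"
  proof (cases "g bt - ereal (\<theta> \<bullet> (X *v bt)) \<ge> 0")
    case True
    then have "ereal (\<theta> \<bullet> (X *v bt)) \<le> g bt"
      by (simp add: ereal_le_minus)
    then have "ereal (neg_fconj y \<theta>) \<le> primal_obj X y g bt"
      by (rule neg_fconj_le_primal_obj)
    with True show ?thesis
      unfolding u_DS_def u_GM_def by simp
  next
    case False
    then show ?thesis
      unfolding u_DS_def by simp
  qed
qed

end
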